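(* Let $k\ge 0$. For all finite structures $\mathcal A_1,\mathcal A_2,\mathcal B_1,\mathcal B_2$ over the same vocabulary, if $\mathrm{Th}^k_{\mathrm{inv}(\mathrm{FO}+<)}(\mathcal A_1)=\mathrm{Th}^k_{\mathrm{inv}(\mathrm{FO}+<)}(\mathcal A_2)$ and $\mathrm{Th}^k_{\mathrm{inv}(\mathrm{FO}+<)}(\mathcal B_1)=\mathrm{Th}^k_{\mathrm{inv}(\mathrm{FO}+<)}(\mathcal B_2)$, then $\mathrm{Th}^k_{\mathrm{inv}(\mathrm{FO}+<)}(\mathcal A_1\sqcup\mathcal B_1)=\mathrm{Th}^k_{\mathrm{inv}(\mathrm{FO}+<)}(\mathcal A_2\sqcup\mathcal B_2)$ and $\mathrm{Th}^k_{\mathrm{inv}(\mathrm{FO}+<)}(\mathcal A_1\times\mathcal B_1)=\mathrm{Th}^k_{\mathrm{inv}(\mathrm{FO}+<)}(\mathcal A_2\times\mathcal B_2)$. That is, the rank-$k$ $<$-invariant FO theories of $\mathcal A\sqcup\mathcal B$ and of $\mathcal A\times\mathcal B$ are uniquely determined by those of $\mathcal A$ and $\mathcal B$.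
   Context: All structures are finite. An FO sentence $\varphi$ over a vocabulary $\tau$ extended with a fresh binary symbol $<$ is $<$-invariant if for every finite $\tau$-structure $\mathcal M$ and any two linear orders $<_1,<_2$ on $\mathrm{dom}(\mathcal M)$, $(\mathcal M,<_1)\models\varphi$ iff $(\mathcal M,<_2)\models\varphi$; then $\varphi$ is true in $\mathcal M$ if $(\mathcal M,<)\models\varphi$ for some (equivalently every) linear order. $\mathrm{Th}^k_{\mathrm{inv}(\mathrm{FO}+<)}(\mathcal M)$ is the set of all $<$-invariant FO sentences of quantifier rank at most $k$ true in $\mathcal M$. $\mathcal A\times\mathcal B$ is the direct product (domain $\mathrm{dom}(\mathcal A)\times\mathrm{dom}(\mathcal B)$, each relation holding of a tuple of pairs iff it holds componentwise in $\mathcal A$ and in $\mathcal B$). $\mathcal A\sqcup\mathcal B$ is the disjoint union, with the vocabulary augmented by two unary predicates naming the universes of $\mathcal A$ and of $\mathcal B$. *)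

theory Defs
  imports Main
begin

text \<open>A relational vocabulary with symbols of type 's is given by an arity
function ar :: 's => nat. Formulas over the vocabulary extended with a fresh
binary symbol < (constructor Lt).\<close>

datatype 's fm =
    Atom 's "nat list"
  | Eq nat nat
  | Lt nat nat
  | Neg "'s fm"
  | Conj "'s fm" "'s fm"
  | Disj "'s fm" "'s fm"
  | Ex nat "'s fm"
  | All nat "'s fm"

fun fv :: "'s fm \<Rightarrow> nat set" where
  "fv (Atom s xs) = set xs"
| "fv (Eq i j) = {i, j}"
| "fv (Lt i j) = {i, j}"
| "fv (Neg p) = fv p"
| "fv (Conj p q) = fv p \<union> fv q"
| "fv (Disj p q) = fv p \<union> fv q"
| "fv (Ex x p) = fv p - {x}"
| "fv (All x p) = fv p - {x}"

fun qr :: "'s fm \<Rightarrow> nat" where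
  "qr (Atom s xs) = 0"
| "qr (Eq i j) = 0"
| "qr (Lt i j) = 0"
| "qr (Neg p) = qr p"
| "qr (Conj p q) = max (qr p) (qr q)"
| "qr (Disj p q) = max (qr p) (qr q)"
| "qr (Ex x p) = Suc (qr p)"
| "qr (All x p) = Suc (qr p)"

fun wf_fm :: "('s \<Rightarrow> nat) \<Rightarrow> 's fm \<Rightarrow> bool" where
  "wf_fm ar (Atom s xs) = (length xs = ar s)"
| "wf_fm ar (Eq i j) = True"
| "wf_fm ar (Lt i j) = True"
| "wf_fm ar (Neg p) = wf_fm ar p"
| "wf_fm ar (Conj p q) = (wf_fm ar p \<and> wf_fm ar q)"
| "wf_fm ar (Disj p q) = (wf_fm ar p \<and> wf_fm ar q)"
| "wf_fm ar (Ex x p) = wf_fm ar p"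
| "wf_fm ar (All x p) = wf_fm ar p"

definition sentence :: "'s fm \<Rightarrow> bool" where
  "sentence p \<longleftrightarrow> fv p = {}"

type_synonym ('s, 'a) struct = "'a set \<times> ('s \<Rightarrow> 'a list set)"

definition dom_of :: "('s, 'a) struct \<Rightarrow> 'a set" where
  "dom_of M = fst M"

definition rel_of :: "('s, 'a) struct \<Rightarrow> 's \<Rightarrow> 'a list set" where
  "rel_of M = snd M"

definition is_struct :: "('s \<Rightarrow> nat) \<Rightarrow> ('s, 'a) struct \<Rightarrow> bool" where
  "is_struct ar M \<longleftrightarrow> finite (dom_of M) \<and> dom_of M \<noteq> {} \<and>
     (\<forall>s. \<forall>t \<in> rel_of M s. length t = ar s \<and> set t \<subseteq> dom_of M)"

definition lin_order :: "'a set \<Rightarrow> 'a rel \<Rightarrow> bool" where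
  "lin_order D R \<longleftrightarrow> R \<subseteq> D \<times> D \<and> strict_linear_order_on D R"

fun eval :: "('s, 'a) struct \<Rightarrow> 'a rel \<Rightarrow> (nat \<Rightarrow> 'a) \<Rightarrow> 's fm \<Rightarrow> bool" where
  "eval M R e (Atom s xs) = (map e xs \<in> rel_of M s)"
| "eval M R e (Eq i j) = (e i = e j)"
| "eval M R e (Lt i j) = ((e i, e j) \<in> R)"
| "eval M R e (Neg p) = (\<not> eval M R e p)"
| "eval M R e (Conj p q) = (eval M R e p \<and> eval M R e q)"
| "eval M R e (Disj p q) = (eval M R e p \<or> eval M R e q)"
| "eval M R e (Ex x p) = (\<exists>a \<in> dom_of M. eval M R (e(x := a)) p)"
| "eval M R e (All x p) = (\<forall>a \<in> dom_of M. eval M R (e(x := a)) p)"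

definition holds :: "('s, 'a) struct \<Rightarrow> 'a rel \<Rightarrow> 's fm \<Rightarrow> bool" where
  "holds M R p \<longleftrightarrow> (\<forall>e. (\<forall>i. e i \<in> dom_of M) \<longrightarrow> eval M R e p)"

text \<open>Order invariance: quantifying over all finite structures whose universe
is a subset of nat (every finite structure is isomorphic to one of these).\<close>
definition ord_inv :: "('s \<Rightarrow> nat) \<Rightarrow> 's fm \<Rightarrow> bool" where
  "ord_inv ar p \<longleftrightarrow>
     (\<forall>M :: ('s, nat) struct. is_struct ar M \<longrightarrow>
       (\<forall>R1 R2. lin_order (dom_of M) R1 \<longrightarrow> lin_order (dom_of M) R2 \<longrightarrow>
          (holds M R1 p \<longleftrightarrow> holds M R2 p)))"

definition Th_inv :: "nat \<Rightarrow> ('s \<Rightarrow> nat) \<Rightarrow> ('s, 'a) struct \<Rightarrow> 's fm set" where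
  "Th_inv k ar M = {p. wf_fm ar p \<and> sentence p \<and> qr p \<le> k \<and> ord_inv ar p \<and>
      (\<exists>R. lin_order (dom_of M) R \<and> holds M R p)}"

text \<open>Vocabulary of the disjoint union: the old symbols (Inl) plus two unary
predicates Inr True (universe of A) and Inr False (universe of B).\<close>
definition ar_du :: "('s \<Rightarrow> nat) \<Rightarrow> 's + bool \<Rightarrow> nat" where
  "ar_du ar s = (case s of Inl r \<Rightarrow> ar r | Inr _ \<Rightarrow> 1)"

definition disj_union :: "('s, 'a) struct \<Rightarrow> ('s, 'b) struct \<Rightarrow> ('s + bool, 'a + 'b) struct" where
  "disj_union A B =
    (Inl ` dom_of A \<union> Inr ` dom_of B,
     (\<lambda>s. case s of
            Inl r \<Rightarrow> map Inl ` rel_of A r \<union> map Inr ` rel_of B r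
          | Inr True \<Rightarrow> {[Inl a] | a. a \<in> dom_of A}
          | Inr False \<Rightarrow> {[Inr b] | b. b \<in> dom_of B}))"

definition direct_prod :: "('s, 'a) struct \<Rightarrow> ('s, 'b) struct \<Rightarrow> ('s, 'a \<times> 'b) struct" where
  "direct_prod A B =
    (dom_of A \<times> dom_of B,
     (\<lambda>r. {t. map fst t \<in> rel_of A r \<and> map snd t \<in> rel_of B r}))"

end

theory Submission
  imports Defs
begin

text \<open>By the Ehrenfeucht-Fraisse theorem for ordered structures, two finite structures have
  the same rank-\<open>k\<close> order-invariant theory iff they are linked by a finite chain of structures in
  which consecutive ones, for suitable linear orders, cannot be told apart in the \<open>k\<close>-round game.
  One direction holds because order-invariant sentences ignore the choice of orders; for the other,
  the disjunction of the rank-\<open>k\<close> Hintikka formulas of all ordered structures in a chain component is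
  an order-invariant sentence of rank \<open>k\<close> that defines the component. Game equivalence survives
  disjoint unions (ordering \<open>A\<close> before \<open>B\<close>) and products (lexicographic order), since Duplicator
  can answer in the two components separately; so chains compose, and the theories of the
  disjoint union and of the product are determined by those of the factors.\<close>

section \<open>Ehrenfeucht-Fraisse games on ordered structures\<close>

definition partial_iso ::
    "('s, 'a) struct \<Rightarrow> 'a rel \<Rightarrow> 'a list \<Rightarrow> ('s, 'b) struct \<Rightarrow> 'b rel \<Rightarrow> 'b list \<Rightarrow> bool" where
  "partial_iso M R as N R' bs \<longleftrightarrow> length as = length bs \<and> set as \<subseteq> dom_of M \<and> set bs \<subseteq> dom_of N \<and>
     (\<forall>i<length as. \<forall>j<length as.
        (as!i = as!j \<longleftrightarrow> bs!i = bs!j) \<and> ((as!i, as!j) \<in> R \<longleftrightarrow> (bs!i, bs!j) \<in> R')) \<and>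
     (\<forall>s ix. set ix \<subseteq> {..<length as} \<longrightarrow>
        (map ((!) as) ix \<in> rel_of M s \<longleftrightarrow> map ((!) bs) ix \<in> rel_of N s))"

fun ef_equiv ::
    "nat \<Rightarrow> ('s, 'a) struct \<Rightarrow> 'a rel \<Rightarrow> 'a list \<Rightarrow> ('s, 'b) struct \<Rightarrow> 'b rel \<Rightarrow> 'b list \<Rightarrow> bool" where
  "ef_equiv 0 M R as N R' bs \<longleftrightarrow> partial_iso M R as N R' bs"
| "ef_equiv (Suc k) M R as N R' bs \<longleftrightarrow> partial_iso M R as N R' bs \<and>
     (\<forall>a\<in>dom_of M. \<exists>b\<in>dom_of N. ef_equiv k M R (as @ [a]) N R' (bs @ [b])) \<and>
     (\<forall>b\<in>dom_of N. \<exists>a\<in>dom_of M. ef_equiv k M R (as @ [a]) N R' (bs @ [b]))"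

lemma ef_equiv_imp_partial_iso: "ef_equiv k M R as N R' bs \<Longrightarrow> partial_iso M R as N R' bs"
  by (cases k) auto

lemma partial_iso_sym: "partial_iso M R as N R' bs \<Longrightarrow> partial_iso N R' bs M R as"
  unfolding partial_iso_def by auto

lemma ef_equiv_sym: "ef_equiv k M R as N R' bs \<Longrightarrow> ef_equiv k N R' bs M R as"
proof (induction k arbitrary: as bs)
  case (Suc k)
  from Suc.prems show ?case
    by (simp only: ef_equiv.simps) (meson Suc.IH partial_iso_sym)
qed (simp add: partial_iso_sym)

lemma ef_equiv_SucD: "ef_equiv (Suc k) M R as N R' bs \<Longrightarrow> ef_equiv k M R as N R' bs"
proof (induction k arbitrary: as bs)
  case (Suc k)
  have iso: "partial_iso M R as N R' bs"
    and forth: "\<forall>a\<in>dom_of M. \<exists>b\<in>dom_of N. ef_equiv (Suc k) M R (as @ [a]) N R' (bs @ [b])"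
    and backward: "\<forall>b\<in>dom_of N. \<exists>a\<in>dom_of M. ef_equiv (Suc k) M R (as @ [a]) N R' (bs @ [b])"
    using Suc.prems unfolding ef_equiv.simps(2)[of "Suc k"] by blast+
  have "\<forall>a\<in>dom_of M. \<exists>b\<in>dom_of N. ef_equiv k M R (as @ [a]) N R' (bs @ [b])"
    using forth Suc.IH by blast
  moreover have "\<forall>b\<in>dom_of N. \<exists>a\<in>dom_of M. ef_equiv k M R (as @ [a]) N R' (bs @ [b])"
    using backward Suc.IH by blast
  ultimately show ?case
    using iso by (simp only: ef_equiv.simps(2)[of k])
qed simp

lemma partial_iso_refl: "set as \<subseteq> dom_of M \<Longrightarrow> partial_iso M R as M R as"
  unfolding partial_iso_def by auto

lemma ef_equiv_refl: "set as \<subseteq> dom_of M \<Longrightarrow> ef_equiv k M R as M R as"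
proof (induction k arbitrary: as)
  case (Suc k)
  then have "\<forall>a\<in>dom_of M. ef_equiv k M R (as @ [a]) M R (as @ [a])"
    by simp
  with Suc.prems show ?case
    by (auto simp: partial_iso_refl)
qed (simp add: partial_iso_refl)

lemma partial_iso_snocD: "partial_iso M R (as @ [a]) N R' (bs @ [b]) \<Longrightarrow> partial_iso M R as N R' bs"
proof -
  assume iso: "partial_iso M R (as @ [a]) N R' (bs @ [b])"
  then have len: "length as = length bs"
    unfolding partial_iso_def by simp
  have nth: "(as @ [a]) ! i = as ! i" "(bs @ [b]) ! i = bs ! i" if "i < length as" for i
    using that len by (simp_all add: nth_append)
  have pairs: "(as!i = as!j \<longleftrightarrow> bs!i = bs!j) \<and> ((as!i, as!j) \<in> R \<longleftrightarrow> (bs!i, bs!j) \<in> R')"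
    if "i < length as" "j < length as" for i j
    using iso that unfolding partial_iso_def
    by (metis length_append_singleton less_SucI nth[OF that(1)] nth[OF that(2)])
  have tuples: "map ((!) as) ix \<in> rel_of M s \<longleftrightarrow> map ((!) bs) ix \<in> rel_of N s"
    if "set ix \<subseteq> {..<length as}" for s ix
  proof -
    have "map ((!) (as @ [a])) ix = map ((!) as) ix" "map ((!) (bs @ [b])) ix = map ((!) bs) ix"
      using that nth by auto
    moreover have "set ix \<subseteq> {..<length (as @ [a])}"
      using that by auto
    ultimately show ?thesis
      using iso unfolding partial_iso_def by metis
  qed
  from iso len pairs tuples show ?thesis
    unfolding partial_iso_def by simp
qed

lemma eval_cong: "(\<And>v. v \<in> fv p \<Longrightarrow> e v = e' v) \<Longrightarrow> eval M R e p = eval M R e' p"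
proof (induction p arbitrary: e e')
  case (Atom s xs)
  then have "map e xs = map e' xs"
    by simp
  then show ?case
    by (simp only: eval.simps)
next
  case (Ex x p)
  then have "eval M R (e(x := a)) p = eval M R (e'(x := a)) p" for a
    by (intro Ex.IH) auto
  then show ?case
    by simp
next
  case (All x p)
  then have "eval M R (e(x := a)) p = eval M R (e'(x := a)) p" for a
    by (intro All.IH) auto
  then show ?case
    by simp
next
  case (Neg p)
  then show ?case
    by (metis eval.simps(4) fv.simps(4))
next
  case (Conj p q)
  then show ?case
    by (metis UnCI eval.simps(5) fv.simps(5))
next
  case (Disj p q)
  then show ?case
    by (metis UnCI eval.simps(6) fv.simps(6))
qed simp_all

text \<open>Each variable \<open>v \<in> V\<close> is bound to position \<open>f v\<close> of the tuple played so far.\<close>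

definition env_from :: "'a list \<Rightarrow> (nat \<Rightarrow> nat) \<Rightarrow> nat set \<Rightarrow> (nat \<Rightarrow> 'a) \<Rightarrow> bool" where
  "env_from as f V e \<longleftrightarrow> (\<forall>v\<in>V. f v < length as \<and> e v = as ! f v)"

lemma env_from_snoc:
  "env_from as f (V - {x}) e \<Longrightarrow> env_from (as @ [a]) (f(x := length as)) V (e(x := a))"
  unfolding env_from_def by (auto simp: nth_append)

lemma env_from_Un: "env_from as f (V \<union> W) e \<longleftrightarrow> env_from as f V e \<and> env_from as f W e"
  unfolding env_from_def by blast

lemma back_and_forth_iff:
  assumes "\<forall>a\<in>A. \<exists>b\<in>B. G a b" and "\<forall>b\<in>B. \<exists>a\<in>A. G a b"
    and "\<And>a b. G a b \<Longrightarrow> P a \<longleftrightarrow> Q b"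
  shows "(\<exists>a\<in>A. P a) \<longleftrightarrow> (\<exists>b\<in>B. Q b)" and "(\<forall>a\<in>A. P a) \<longleftrightarrow> (\<forall>b\<in>B. Q b)"
  using assms by meson+

lemma ef_equiv_quantifier_step:
  assumes game: "ef_equiv (Suc k) M R as N R' bs"
    and IH: "\<And>as bs f e e'. ef_equiv k M R as N R' bs \<Longrightarrow>
      env_from as f (fv p) e \<Longrightarrow> env_from bs f (fv p) e' \<Longrightarrow> eval M R e p \<longleftrightarrow> eval N R' e' p"
    and env: "env_from as f (fv p - {x}) e" "env_from bs f (fv p - {x}) e'"
  shows "(\<exists>a\<in>dom_of M. eval M R (e(x := a)) p) \<longleftrightarrow> (\<exists>b\<in>dom_of N. eval N R' (e'(x := b)) p)"
    and "(\<forall>a\<in>dom_of M. eval M R (e(x := a)) p) \<longleftrightarrow> (\<forall>b\<in>dom_of N. eval N R' (e'(x := b)) p)"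
proof -
  have len: "length bs = length as"
    using ef_equiv_imp_partial_iso[OF game] unfolding partial_iso_def by simp
  have step: "eval M R (e(x := a)) p \<longleftrightarrow> eval N R' (e'(x := b)) p"
    if "ef_equiv k M R (as @ [a]) N R' (bs @ [b])" for a b
    using IH[OF that env_from_snoc[OF env(1)]] env_from_snoc[OF env(2)] len by simp
  from game have forth: "\<forall>a\<in>dom_of M. \<exists>b\<in>dom_of N. ef_equiv k M R (as @ [a]) N R' (bs @ [b])"
    and backward: "\<forall>b\<in>dom_of N. \<exists>a\<in>dom_of M. ef_equiv k M R (as @ [a]) N R' (bs @ [b])"
    by simp_all
  show "(\<exists>a\<in>dom_of M. eval M R (e(x := a)) p) \<longleftrightarrow> (\<exists>b\<in>dom_of N. eval N R' (e'(x := b)) p)"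
    by (rule back_and_forth_iff(1)[OF forth backward]) (rule step)
  show "(\<forall>a\<in>dom_of M. eval M R (e(x := a)) p) \<longleftrightarrow> (\<forall>b\<in>dom_of N. eval N R' (e'(x := b)) p)"
    by (rule back_and_forth_iff(2)[OF forth backward]) (rule step)
qed

lemma ef_equiv_eval_eq:
  assumes "ef_equiv k M R as N R' bs" and "qr p \<le> k"
    and "env_from as f (fv p) e" and "env_from bs f (fv p) e'"
  shows "eval M R e p \<longleftrightarrow> eval N R' e' p"
  using assms
proof (induction p arbitrary: k e e' f as bs)
  case (Atom s xs)
  then have tuples: "map e xs = map ((!) as) (map f xs)" "map e' xs = map ((!) bs) (map f xs)"
    and "set (map f xs) \<subseteq> {..<length as}"
    by (auto simp: env_from_def)
  with ef_equiv_imp_partial_iso[OF Atom.prems(1)] show ?case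
    unfolding partial_iso_def eval.simps tuples by blast
next
  case (Eq i j)
  with ef_equiv_imp_partial_iso[OF Eq.prems(1)] show ?case
    unfolding partial_iso_def env_from_def by simp
next
  case (Lt i j)
  with ef_equiv_imp_partial_iso[OF Lt.prems(1)] show ?case
    unfolding partial_iso_def env_from_def by simp
next
  case (Neg p)
  then show ?case by simp
next
  case (Conj p q)
  from Conj.prems(2-4) have "qr p \<le> k" "qr q \<le> k"
    "env_from as f (fv p) e" "env_from as f (fv q) e" "env_from bs f (fv p) e'" "env_from bs f (fv q) e'"
    by (simp_all add: env_from_Un)
  with Conj.IH[OF Conj.prems(1)] show ?case by simp
next
  case (Disj p q)
  from Disj.prems(2-4) have "qr p \<le> k" "qr q \<le> k"
    "env_from as f (fv p) e" "env_from as f (fv q) e" "env_from bs f (fv p) e'" "env_from bs f (fv q) e'"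
    by (simp_all add: env_from_Un)
  with Disj.IH[OF Disj.prems(1)] show ?case by simp
next
  case (Ex x p)
  then obtain k' where "k = Suc k'" "qr p \<le> k'"
    by (cases k) auto
  with Ex show ?case
    using ef_equiv_quantifier_step(1)[of k' M R as N R' bs p] by simp
next
  case (All x p)
  then obtain k' where "k = Suc k'" "qr p \<le> k'"
    by (cases k) auto
  with All show ?case
    using ef_equiv_quantifier_step(2)[of k' M R as N R' bs p] by simp
qed

lemma holds_iff_eval:
  assumes "sentence p" and "a \<in> dom_of M"
  shows "holds M R p \<longleftrightarrow> eval M R (\<lambda>_. a) p"
proof -
  have closed: "eval M R e p \<longleftrightarrow> eval M R (\<lambda>_. a) p" for e
    by (rule eval_cong) (use assms(1) in \<open>simp add: sentence_def\<close>)
  show ?thesis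
    unfolding holds_def
  proof
    assume "\<forall>e. (\<forall>i. e i \<in> dom_of M) \<longrightarrow> eval M R e p"
    then show "eval M R (\<lambda>_. a) p"
      using assms(2) by simp
  qed (metis closed)
qed

lemma ef_equiv_holds_iff:
  assumes "ef_equiv k M R [] N R' []" and "sentence p" and "qr p \<le> k"
    and "dom_of M \<noteq> {}" and "dom_of N \<noteq> {}"
  shows "holds M R p \<longleftrightarrow> holds N R' p"
proof -
  obtain a b where a: "a \<in> dom_of M" and b: "b \<in> dom_of N"
    using assms(4,5) by blast
  have "env_from [] id (fv p) (\<lambda>_. a)" and "env_from [] id (fv p) (\<lambda>_. b)"
    using assms(2) by (simp_all add: sentence_def env_from_def)
  then have "eval M R (\<lambda>_. a) p \<longleftrightarrow> eval N R' (\<lambda>_. b) p"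
    by (rule ef_equiv_eval_eq[OF assms(1,3)])
  with holds_iff_eval[OF assms(2) a] holds_iff_eval[OF assms(2) b] show ?thesis
    by simp
qed

section \<open>Hintikka formulas\<close>

definition formulas :: "('s \<Rightarrow> nat) \<Rightarrow> nat \<Rightarrow> nat \<Rightarrow> 's fm set" where
  "formulas ar k n = {p. wf_fm ar p \<and> qr p \<le> k \<and> fv p \<subseteq> {..<n}}"

lemma Neg_in_formulas [simp]: "Neg p \<in> formulas ar k n \<longleftrightarrow> p \<in> formulas ar k n"
  by (simp add: formulas_def)

lemma quantifier_in_formulas:
  "p \<in> formulas ar k (Suc n) \<Longrightarrow> Ex n p \<in> formulas ar (Suc k) n"
  "p \<in> formulas ar k (Suc n) \<Longrightarrow> All n p \<in> formulas ar (Suc k) n"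
  by (auto simp: formulas_def less_Suc_eq)

lemma sentence_iff_formulas: "sentence p \<and> qr p \<le> k \<and> wf_fm ar p \<longleftrightarrow> p \<in> formulas ar k 0"
  by (auto simp: formulas_def sentence_def)

text \<open>\<open>list_conj []\<close> is a junk value: conjunctions are only formed over nonempty sets.\<close>

fun list_conj :: "'s fm list \<Rightarrow> 's fm" where
  "list_conj [] = Eq 0 0"
| "list_conj [p] = p"
| "list_conj (p # q # ps) = Conj p (list_conj (q # ps))"

lemma list_conj:
  "xs \<noteq> [] \<Longrightarrow> (eval M R e (list_conj xs) \<longleftrightarrow> (\<forall>p\<in>set xs. eval M R e p)) \<and>
     (list_conj xs \<in> formulas ar k n \<longleftrightarrow> set xs \<subseteq> formulas ar k n)"
  by (induction xs rule: list_conj.induct) (auto simp: formulas_def)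

definition big_conj :: "'s fm set \<Rightarrow> 's fm" where
  "big_conj S = list_conj (SOME xs. set xs = S)"

definition big_disj :: "'s fm set \<Rightarrow> 's fm" where
  "big_disj S = Neg (big_conj (Neg ` S))"

lemma big_conj:
  assumes "finite S" and "S \<noteq> {}"
  shows eval_big_conj: "eval M R e (big_conj S) \<longleftrightarrow> (\<forall>p\<in>S. eval M R e p)"
    and big_conj_in_formulas: "big_conj S \<in> formulas ar k n \<longleftrightarrow> S \<subseteq> formulas ar k n"
proof -
  obtain xs where "set xs = S"
    using finite_list[OF assms(1)] by blast
  then have xs: "set (SOME xs. set xs = S) = S"
    by (rule someI)
  with assms(2) have "(SOME xs. set xs = S) \<noteq> []"
    by auto
  from list_conj[OF this, of M R e ar k n] xs
  show "eval M R e (big_conj S) \<longleftrightarrow> (\<forall>p\<in>S. eval M R e p)"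
    and "big_conj S \<in> formulas ar k n \<longleftrightarrow> S \<subseteq> formulas ar k n"
    unfolding big_conj_def by simp_all
qed

lemma big_disj:
  assumes "finite S" and "S \<noteq> {}"
  shows eval_big_disj: "eval M R e (big_disj S) \<longleftrightarrow> (\<exists>p\<in>S. eval M R e p)"
    and big_disj_in_formulas: "big_disj S \<in> formulas ar k n \<longleftrightarrow> S \<subseteq> formulas ar k n"
  using assms by (auto simp: big_disj_def eval_big_conj big_conj_in_formulas)

definition atoms :: "('s \<Rightarrow> nat) \<Rightarrow> nat \<Rightarrow> 's fm set" where
  "atoms ar n = (\<lambda>(i, j). Eq i j) ` ({..<n} \<times> {..<n}) \<union> (\<lambda>(i, j). Lt i j) ` ({..<n} \<times> {..<n})
     \<union> (\<Union>s. Atom s ` {xs. set xs \<subseteq> {..<n} \<and> length xs = ar s})"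

lemma finite_atoms: "finite (UNIV :: 's set) \<Longrightarrow> finite (atoms (ar :: 's \<Rightarrow> nat) n)"
  unfolding atoms_def by (intro finite_UnI finite_UN_I finite_imageI finite_lists_length_eq) auto

lemma atoms_subset_formulas: "atoms ar n \<subseteq> formulas ar 0 n"
  unfolding atoms_def formulas_def by auto

lemma atoms_nonempty: "0 < n \<or> (\<exists>s. ar s = 0) \<Longrightarrow> atoms ar n \<noteq> {}"
  unfolding atoms_def by (auto intro!: exI[of _ "[]"])

lemma eval_atom_cong:
  assumes "p \<in> atoms ar (length as)" and "\<forall>v<length as. e v = as ! v"
  shows "eval M R e p \<longleftrightarrow> eval M R ((!) as) p"
proof (rule eval_cong)
  fix v
  assume "v \<in> fv p"
  moreover have "fv p \<subseteq> {..<length as}"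
    using assms(1) atoms_subset_formulas unfolding formulas_def by blast
  ultimately show "e v = as ! v"
    using assms(2) by auto
qed

lemma partial_iso_if_atoms_agree:
  assumes "is_struct ar M" and "is_struct ar N"
    and "set as \<subseteq> dom_of M" and "set bs \<subseteq> dom_of N" and len: "length as = length bs"
    and agree: "\<forall>p\<in>atoms ar (length as). eval M R ((!) as) p \<longleftrightarrow> eval N R' ((!) bs) p"
  shows "partial_iso M R as N R' bs"
proof -
  have pairs: "(as!i = as!j \<longleftrightarrow> bs!i = bs!j) \<and> ((as!i, as!j) \<in> R \<longleftrightarrow> (bs!i, bs!j) \<in> R')"
    if "i < length as" "j < length as" for i j
  proof -
    from that have "Eq i j \<in> atoms ar (length as)" and "Lt i j \<in> atoms ar (length as)"
      unfolding atoms_def by auto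
    with agree show ?thesis
      by auto
  qed
  have tuples: "map ((!) as) ix \<in> rel_of M s \<longleftrightarrow> map ((!) bs) ix \<in> rel_of N s"
    if "set ix \<subseteq> {..<length as}" for s ix
  proof (cases "length ix = ar s")
    case True
    with that have "Atom s ix \<in> atoms ar (length as)"
      unfolding atoms_def by blast
    with agree show ?thesis
      by auto
  next
    case False
    then have "length (map ((!) as) ix) \<noteq> ar s" and "length (map ((!) bs) ix) \<noteq> ar s"
      by simp_all
    with assms(1,2) show ?thesis
      unfolding is_struct_def by blast
  qed
  show ?thesis
    using assms(3-5) pairs tuples unfolding partial_iso_def by simp
qed

definition atomic_type :: "('s \<Rightarrow> nat) \<Rightarrow> ('s, 'a) struct \<Rightarrow> 'a rel \<Rightarrow> 'a list \<Rightarrow> 's fm set" where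
  "atomic_type ar M R as = (\<lambda>p. if eval M R ((!) as) p then p else Neg p) ` atoms ar (length as)"

definition hintikka_step :: "nat \<Rightarrow> 's fm set \<Rightarrow> 's fm" where
  "hintikka_step n S = big_conj (Ex n ` S \<union> {All n (big_disj S)})"

fun hintikka :: "('s \<Rightarrow> nat) \<Rightarrow> nat \<Rightarrow> ('s, 'a) struct \<Rightarrow> 'a rel \<Rightarrow> 'a list \<Rightarrow> 's fm" where
  "hintikka ar 0 M R as = big_conj (atomic_type ar M R as)"
| "hintikka ar (Suc k) M R as =
     hintikka_step (length as) ((\<lambda>a. hintikka ar k M R (as @ [a])) ` dom_of M)"

fun hintikka_range :: "('s \<Rightarrow> nat) \<Rightarrow> nat \<Rightarrow> nat \<Rightarrow> 's fm set" where
  "hintikka_range ar 0 n = big_conj ` Pow (atoms ar n \<union> Neg ` atoms ar n)"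
| "hintikka_range ar (Suc k) n = hintikka_step n ` Pow (hintikka_range ar k (Suc n))"

lemma hintikka_in_range: "hintikka ar k M R as \<in> hintikka_range ar k (length as)"
proof (induction k arbitrary: as)
  case 0
  have "atomic_type ar M R as \<subseteq> atoms ar (length as) \<union> Neg ` atoms ar (length as)"
    unfolding atomic_type_def by auto
  then show ?case
    by simp
next
  case (Suc k)
  then have "(\<lambda>a. hintikka ar k M R (as @ [a])) ` dom_of M \<subseteq> hintikka_range ar k (Suc (length as))"
    by (metis image_subsetI length_append_singleton)
  then show ?case
    by simp
qed

lemma finite_hintikka_range:
  "finite (UNIV :: 's set) \<Longrightarrow> finite (hintikka_range (ar :: 's \<Rightarrow> nat) k n)"
  by (induction k arbitrary: n) (simp_all add: finite_atoms)

text \<open>Without nullary symbols there are no atomic sentences, so the atomic type of the empty tuple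
  is empty; hence the side condition \<open>0 < k + length as \<or> (\<exists>s. ar s = 0)\<close> below.\<close>

lemma atomic_type_finite_nonempty:
  assumes "finite (UNIV :: 's set)" and "0 < length as \<or> (\<exists>s. ar s = 0)"
  shows "finite (atomic_type (ar :: 's \<Rightarrow> nat) M R as)" and "atomic_type ar M R as \<noteq> {}"
  using finite_atoms[OF assms(1)] atoms_nonempty[OF assms(2)] unfolding atomic_type_def by blast+

lemma hintikka_step:
  assumes "finite S" and "S \<noteq> {}"
  shows eval_hintikka_step: "eval M R e (hintikka_step n S) \<longleftrightarrow>
      (\<forall>p\<in>S. \<exists>a\<in>dom_of M. eval M R (e(n := a)) p) \<and> (\<forall>a\<in>dom_of M. \<exists>p\<in>S. eval M R (e(n := a)) p)"
    and hintikka_step_in_formulas: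
      "S \<subseteq> formulas ar k (Suc n) \<Longrightarrow> hintikka_step n S \<in> formulas ar (Suc k) n"
proof -
  have "finite (Ex n ` S \<union> {All n (big_disj S)})" and "Ex n ` S \<union> {All n (big_disj S)} \<noteq> {}"
    using assms(1) by simp_all
  note conj = big_conj[OF this]
  show "eval M R e (hintikka_step n S) \<longleftrightarrow>
      (\<forall>p\<in>S. \<exists>a\<in>dom_of M. eval M R (e(n := a)) p) \<and> (\<forall>a\<in>dom_of M. \<exists>p\<in>S. eval M R (e(n := a)) p)"
    unfolding hintikka_step_def conj(1) by (auto simp: eval_big_disj[OF assms])
  show "S \<subseteq> formulas ar k (Suc n) \<Longrightarrow> hintikka_step n S \<in> formulas ar (Suc k) n"
    unfolding hintikka_step_def conj(2)
    using big_disj_in_formulas[OF assms] quantifier_in_formulas by blast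
qed

lemma hintikka_in_formulas:
  assumes "finite (UNIV :: 's set)" and "finite (dom_of M)" and "dom_of M \<noteq> {}"
    and "0 < k + length as \<or> (\<exists>s. ar s = 0)"
  shows "hintikka (ar :: 's \<Rightarrow> nat) k M R as \<in> formulas ar k (length as)"
  using assms(4)
proof (induction k arbitrary: as)
  case 0
  from 0 have "0 < length as \<or> (\<exists>s. ar s = 0)"
    by simp
  note type = atomic_type_finite_nonempty[OF assms(1) this, of M R]
  have "atomic_type ar M R as \<subseteq> formulas ar 0 (length as)"
    using atoms_subset_formulas[of ar "length as"] unfolding atomic_type_def by auto
  then show ?case
    unfolding hintikka.simps big_conj_in_formulas[OF type] .
next
  case (Suc k)
  have "hintikka ar k M R (as @ [a]) \<in> formulas ar k (Suc (length as))" for a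
    using Suc.IH[of "as @ [a]"] by simp
  then have "(\<lambda>a. hintikka ar k M R (as @ [a])) ` dom_of M \<subseteq> formulas ar k (Suc (length as))"
    by blast
  with assms(2,3) show ?case
    by (simp add: hintikka_step_in_formulas)
qed

lemma eval_hintikka:
  assumes "finite (UNIV :: 's set)" and "finite (dom_of M)" and "dom_of M \<noteq> {}"
    and "0 < k + length as \<or> (\<exists>s. ar s = 0)" and "\<forall>v<length as. e v = as ! v"
  shows "eval M R e (hintikka (ar :: 's \<Rightarrow> nat) k M R as)"
  using assms(4,5)
proof (induction k arbitrary: as e)
  case 0
  from 0 have "0 < length as \<or> (\<exists>s. ar s = 0)"
    by simp
  note type = atomic_type_finite_nonempty[OF assms(1) this, of M R]
  have "eval M R e p" if "p \<in> atomic_type ar M R as" for p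
    using that eval_atom_cong[OF _ 0(2), where M = M and R = R] unfolding atomic_type_def by (auto split: if_splits)
  then show ?case
    unfolding hintikka.simps eval_big_conj[OF type] by blast
next
  case (Suc k)
  have "eval M R (e(length as := a)) (hintikka ar k M R (as @ [a]))" for a
    using Suc.prems(2) by (intro Suc.IH) (auto simp: nth_append less_Suc_eq)
  with assms(2,3) show ?case
    by (auto simp: eval_hintikka_step)
qed

lemma atomic_type_imp_partial_iso:
  assumes M: "is_struct ar M" and N: "is_struct ar N"
    and "set as \<subseteq> dom_of M" and "set bs \<subseteq> dom_of N" and len: "length as = length bs"
    and env: "\<forall>v<length bs. e v = bs ! v" and type: "\<forall>q\<in>atomic_type ar M R as. eval N R' e q"
  shows "partial_iso M R as N R' bs"
proof (rule partial_iso_if_atoms_agree[OF assms(1-5)], intro ballI)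
  fix p
  assume p: "p \<in> atoms ar (length as)"
  with type have "eval N R' e (if eval M R ((!) as) p then p else Neg p)"
    unfolding atomic_type_def by blast
  moreover have "eval N R' e p \<longleftrightarrow> eval N R' ((!) bs) p"
    using eval_atom_cong[of p ar bs e N R'] p len env by simp
  ultimately show "eval M R ((!) as) p \<longleftrightarrow> eval N R' ((!) bs) p"
    by (simp split: if_splits)
qed

lemma hintikka_imp_ef_equiv:
  assumes "finite (UNIV :: 's set)" and M: "is_struct (ar :: 's \<Rightarrow> nat) M" and N: "is_struct ar N"
    and "0 < k + length as \<or> (\<exists>s. ar s = 0)"
    and "set as \<subseteq> dom_of M" and "set bs \<subseteq> dom_of N" and "length as = length bs"
    and "\<forall>v<length bs. e v = bs ! v" and "eval N R' e (hintikka ar k M R as)"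
  shows "ef_equiv k M R as N R' bs"
  using assms(4-)
proof (induction k arbitrary: as bs e)
  case 0
  from 0 have "0 < length as \<or> (\<exists>s. ar s = 0)"
    by simp
  note type = atomic_type_finite_nonempty[OF assms(1) this, of M R]
  have "\<forall>q\<in>atomic_type ar M R as. eval N R' e q"
    using 0(6) by (simp add: eval_big_conj[OF type])
  with atomic_type_imp_partial_iso[OF M N 0(2-5)] show ?case
    by simp
next
  case (Suc k)
  have dom: "finite (dom_of M)" "dom_of M \<noteq> {}"
    using M unfolding is_struct_def by auto
  have extend: "ef_equiv k M R (as @ [a]) N R' (bs @ [b])"
    if "a \<in> dom_of M" and "b \<in> dom_of N"
      and "eval N R' (e(length as := b)) (hintikka ar k M R (as @ [a]))" for a b
    using that Suc.prems(2-5) by (intro Suc.IH) (auto simp: nth_append less_Suc_eq)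
  from Suc.prems(6) dom
  have hint_forth: "\<forall>a\<in>dom_of M. \<exists>b\<in>dom_of N. eval N R' (e(length as := b)) (hintikka ar k M R (as @ [a]))"
    and hint_back: "\<forall>b\<in>dom_of N. \<exists>a\<in>dom_of M. eval N R' (e(length as := b)) (hintikka ar k M R (as @ [a]))"
    by (simp_all add: eval_hintikka_step)
  have forth: "\<forall>a\<in>dom_of M. \<exists>b\<in>dom_of N. ef_equiv k M R (as @ [a]) N R' (bs @ [b])"
    using hint_forth extend by blast
  have backward: "\<forall>b\<in>dom_of N. \<exists>a\<in>dom_of M. ef_equiv k M R (as @ [a]) N R' (bs @ [b])"
    using hint_back extend by blast
  obtain a where "a \<in> dom_of M"
    using dom(2) by blast
  with forth obtain b where "ef_equiv k M R (as @ [a]) N R' (bs @ [b])"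
    by blast
  then have "partial_iso M R as N R' bs"
    by (rule partial_iso_snocD[OF ef_equiv_imp_partial_iso])
  with forth backward show ?case
    by simp
qed

section \<open>Isomorphic copies and order invariance\<close>

lemma lin_order_less_on: "lin_order S {(x, y). x \<in> S \<and> y \<in> S \<and> x < y}"
  for S :: "'a :: linorder set"
  unfolding lin_order_def strict_linear_order_on_def trans_def irrefl_def total_on_def by auto

lemma lin_order_image:
  assumes lin: "lin_order D R" and inj: "inj_on f D"
  shows "lin_order (f ` D) (map_prod f f ` R)"
proof -
  let ?g = "inv_into D f"
  have R: "R \<subseteq> D \<times> D" "trans R" "irrefl R" "total_on D R"
    using lin unfolding lin_order_def strict_linear_order_on_def by auto
  have image: "(u, v) \<in> map_prod f f ` R \<longleftrightarrow> u \<in> f ` D \<and> v \<in> f ` D \<and> (?g u, ?g v) \<in> R" for u v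
  proof
    assume "(u, v) \<in> map_prod f f ` R"
    then obtain x y where "(x, y) \<in> R" "u = f x" "v = f y"
      by auto
    with R(1) inj show "u \<in> f ` D \<and> v \<in> f ` D \<and> (?g u, ?g v) \<in> R"
      by auto
  next
    assume uv: "u \<in> f ` D \<and> v \<in> f ` D \<and> (?g u, ?g v) \<in> R"
    then have "map_prod f f (?g u, ?g v) \<in> map_prod f f ` R"
      by blast
    moreover have "map_prod f f (?g u, ?g v) = (u, v)"
      using uv by (simp add: f_inv_into_f)
    ultimately show "(u, v) \<in> map_prod f f ` R"
      by simp
  qed
  have distinct: "?g u \<noteq> ?g v" if "u \<in> f ` D" "v \<in> f ` D" "u \<noteq> v" for u v
    using that by (metis f_inv_into_f)
  show ?thesis
    unfolding lin_order_def strict_linear_order_on_def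
  proof (intro conjI)
    show "map_prod f f ` R \<subseteq> f ` D \<times> f ` D"
      using R(1) by auto
    show "trans (map_prod f f ` R)"
      using R(2) unfolding trans_def image by blast
    show "irrefl (map_prod f f ` R)"
      using R(3) unfolding irrefl_def image by blast
    show "total_on (f ` D) (map_prod f f ` R)"
      using R(4) distinct inv_into_into[of _ f D] unfolding total_on_def image by blast
  qed
qed

lemma exists_lin_order: "finite D \<Longrightarrow> \<exists>R. lin_order D R"
proof -
  assume "finite D"
  then obtain f :: "'a \<Rightarrow> nat" where "inj_on f D"
    using finite_imp_inj_to_nat_seg by blast
  then have "inj_on (inv_into D f) (f ` D)" and D: "inv_into D f ` f ` D = D"
    by (simp_all add: inj_on_inv_into)
  from lin_order_image[OF lin_order_less_on this(1)] show ?thesis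
    unfolding D by blast
qed

definition map_struct :: "('a \<Rightarrow> 'b) \<Rightarrow> ('s, 'a) struct \<Rightarrow> ('s, 'b) struct" where
  "map_struct f M = (f ` dom_of M, \<lambda>s. map f ` rel_of M s)"

lemma dom_map_struct [simp]: "dom_of (map_struct f M) = f ` dom_of M"
  and rel_map_struct [simp]: "rel_of (map_struct f M) s = map f ` rel_of M s"
  unfolding map_struct_def dom_of_def rel_of_def by simp_all

lemma is_struct_map_struct: "is_struct ar M \<Longrightarrow> is_struct ar (map_struct f M)"
  unfolding is_struct_def by auto

lemma partial_iso_map_struct:
  assumes inj: "inj_on f (dom_of M)" and M: "is_struct ar M" and R: "R \<subseteq> dom_of M \<times> dom_of M"
    and as: "set as \<subseteq> dom_of M"
  shows "partial_iso M R as (map_struct f M) (map_prod f f ` R) (map f as)"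
proof -
  have pairs: "(as!i = as!j \<longleftrightarrow> f (as!i) = f (as!j)) \<and>
      ((as!i, as!j) \<in> R \<longleftrightarrow> map_prod f f (as!i, as!j) \<in> map_prod f f ` R)"
    if "i < length as" "j < length as" for i j
  proof -
    have "as!i \<in> dom_of M" "as!j \<in> dom_of M"
      using that as by (meson nth_mem subsetD)+
    with inj R show ?thesis
      using inj_on_image_mem_iff[OF map_prod_inj_on[OF inj inj]] by (auto simp: inj_on_eq_iff)
  qed
  have tuples: "map ((!) as) ix \<in> rel_of M s \<longleftrightarrow> map ((!) (map f as)) ix \<in> rel_of (map_struct f M) s"
    if ix: "set ix \<subseteq> {..<length as}" for s ix
  proof -
    have "map ((!) as) ix \<in> rel_of M s \<longleftrightarrow> map f (map ((!) as) ix) \<in> map f ` rel_of M s"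
    proof (rule inj_on_image_mem_iff[symmetric])
      show "inj_on (map f) {xs. set xs \<subseteq> dom_of M}"
        using inj by (intro inj_on_mapI) (auto intro: inj_on_subset)
      show "map ((!) as) ix \<in> {xs. set xs \<subseteq> dom_of M}"
        using ix as by (auto dest!: subsetD nth_mem)
      show "rel_of M s \<subseteq> {xs. set xs \<subseteq> dom_of M}"
        using M unfolding is_struct_def by auto
    qed
    moreover have "map ((!) (map f as)) ix = map f (map ((!) as) ix)"
      using ix by auto
    ultimately show ?thesis
      by (simp only: rel_map_struct)
  qed
  show ?thesis
    unfolding partial_iso_def using as pairs tuples by auto
qed

lemma ef_equiv_map_struct:
  assumes "inj_on f (dom_of M)" and "is_struct ar M" and "R \<subseteq> dom_of M \<times> dom_of M"
    and "set as \<subseteq> dom_of M"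
  shows "ef_equiv k M R as (map_struct f M) (map_prod f f ` R) (map f as)"
  using assms(4)
proof (induction k arbitrary: as)
  case 0
  then show ?case
    using partial_iso_map_struct[OF assms(1-3)] by simp
next
  case (Suc k)
  have "ef_equiv k M R (as @ [a]) (map_struct f M) (map_prod f f ` R) (map f as @ [f a])"
    if "a \<in> dom_of M" for a
    using Suc.IH[of "as @ [a]"] Suc.prems that by simp
  with Suc.prems show ?case
    using partial_iso_map_struct[OF assms(1-3)] by auto
qed

lemma lin_order_image_map_struct:
  "lin_order (dom_of M) R \<Longrightarrow> inj_on f (dom_of M) \<Longrightarrow>
    lin_order (dom_of (map_struct f M)) (map_prod f f ` R)"
  using lin_order_image by simp

lemma is_struct_inj_to_nat:
  assumes "is_struct ar M"
  shows "\<exists>f :: 'a \<Rightarrow> nat. inj_on f (dom_of M)"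
proof -
  have "finite (dom_of M)"
    using assms unfolding is_struct_def by blast
  then show ?thesis
    using finite_imp_inj_to_nat_seg by blast
qed

lemma ord_inv_holds_iff:
  fixes M :: "('s, 'a) struct"
  assumes M: "is_struct ar M" and "ord_inv ar p" and "sentence p"
    and R1: "lin_order (dom_of M) R1" and R2: "lin_order (dom_of M) R2"
  shows "holds M R1 p \<longleftrightarrow> holds M R2 p"
proof -
  obtain f :: "'a \<Rightarrow> nat" where f: "inj_on f (dom_of M)"
    using is_struct_inj_to_nat[OF M] by blast
  let ?C = "map_struct f M"
  have dom: "dom_of M \<noteq> {}" "dom_of ?C \<noteq> {}"
    using M unfolding is_struct_def by auto
  have copy: "holds M R p \<longleftrightarrow> holds ?C (map_prod f f ` R) p" if "lin_order (dom_of M) R" for R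
  proof (rule ef_equiv_holds_iff[OF _ assms(3) order_refl dom])
    show "ef_equiv (qr p) M R [] ?C (map_prod f f ` R) []"
      using ef_equiv_map_struct[OF f M, of R "[]"] that unfolding lin_order_def by simp
  qed
  have "holds ?C (map_prod f f ` R1) p \<longleftrightarrow> holds ?C (map_prod f f ` R2) p"
    using assms(2) is_struct_map_struct[OF M] lin_order_image_map_struct[OF R1 f]
      lin_order_image_map_struct[OF R2 f]
    unfolding ord_inv_def by blast
  with copy[OF R1] copy[OF R2] show ?thesis
    by simp
qed

lemma mem_Th_inv_iff:
  assumes M: "is_struct ar M"
  shows "p \<in> Th_inv k ar M \<longleftrightarrow> p \<in> formulas ar k 0 \<and> ord_inv ar p \<and>
    (\<forall>R. lin_order (dom_of M) R \<longrightarrow> holds M R p)"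
proof -
  obtain R0 where "lin_order (dom_of M) R0"
    using M exists_lin_order unfolding is_struct_def by blast
  then show ?thesis
    using ord_inv_holds_iff[OF M] unfolding Th_inv_def sentence_iff_formulas[symmetric] by blast
qed

lemma ef_equiv_Th_inv_subset:
  assumes M: "is_struct ar M" and N: "is_struct ar N"
    and R: "lin_order (dom_of M) R" and R': "lin_order (dom_of N) R'"
    and game: "ef_equiv k M R [] N R' []"
  shows "Th_inv k ar M \<subseteq> Th_inv k ar N"
proof
  fix p
  assume "p \<in> Th_inv k ar M"
  then have p: "p \<in> formulas ar k 0" "ord_inv ar p" and "holds M R p"
    using R unfolding mem_Th_inv_iff[OF M] by blast+
  moreover have "dom_of M \<noteq> {}" "dom_of N \<noteq> {}"
    using M N unfolding is_struct_def by auto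
  ultimately have "holds N R' p"
    using ef_equiv_holds_iff[OF game] p(1) unfolding sentence_iff_formulas[symmetric] by blast
  with p R' show "p \<in> Th_inv k ar N"
    using ord_inv_holds_iff[OF N p(2)] unfolding mem_Th_inv_iff[OF N] sentence_iff_formulas[symmetric]
    by blast
qed

section \<open>Chains of game equivalent structures\<close>

definition game_equiv :: "nat \<Rightarrow> ('s \<Rightarrow> nat) \<Rightarrow> ('s, 'a) struct \<Rightarrow> ('s, 'b) struct \<Rightarrow> bool" where
  "game_equiv k ar M N \<longleftrightarrow> is_struct ar M \<and> is_struct ar N \<and>
     (\<exists>R R'. lin_order (dom_of M) R \<and> lin_order (dom_of N) R' \<and> ef_equiv k M R [] N R' [])"

lemma game_equiv_Th_inv_eq: "game_equiv k ar M N \<Longrightarrow> Th_inv k ar M = Th_inv k ar N"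
  unfolding game_equiv_def
  by (metis ef_equiv_Th_inv_subset ef_equiv_sym subset_antisym)

lemma game_equiv_refl:
  assumes "is_struct ar M"
  shows "game_equiv k ar M M"
proof -
  obtain R where "lin_order (dom_of M) R"
    using assms exists_lin_order unfolding is_struct_def by blast
  with assms ef_equiv_refl[of "[]" M k R] show ?thesis
    unfolding game_equiv_def by auto
qed

lemma game_equiv_nat_copy:
  fixes M :: "('s, 'a) struct"
  assumes M: "is_struct ar M"
  obtains M' :: "('s, nat) struct" where "game_equiv k ar M M'"
proof -
  obtain f :: "'a \<Rightarrow> nat" where f: "inj_on f (dom_of M)"
    using is_struct_inj_to_nat[OF M] by blast
  obtain R where R: "lin_order (dom_of M) R"
    using M exists_lin_order unfolding is_struct_def by blast
  have "ef_equiv k M R [] (map_struct f M) (map_prod f f ` R) []"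
    using ef_equiv_map_struct[OF f M, of R "[]"] R unfolding lin_order_def by simp
  with M R f have "game_equiv k ar M (map_struct f M)"
    unfolding game_equiv_def using is_struct_map_struct lin_order_image_map_struct by blast
  then show ?thesis
    by (rule that)
qed

text \<open>\<open>ord_inv\<close> only quantifies over structures with universe in \<open>nat\<close>, so chains of game
  equivalent structures are formed there; every finite structure has such a copy.\<close>

definition game_chain :: "nat \<Rightarrow> ('s \<Rightarrow> nat) \<Rightarrow> (('s, nat) struct \<times> ('s, nat) struct) set" where
  "game_chain k ar = {(X, Y). game_equiv k ar X Y}"

lemma game_chain_is_struct: "(X, Y) \<in> (game_chain k ar)\<^sup>* \<Longrightarrow> is_struct ar X \<Longrightarrow> is_struct ar Y"
  by (induction rule: rtrancl_induct) (auto simp: game_chain_def game_equiv_def)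

lemma ef_equiv_0_Nil:
  assumes "\<forall>s. ar s \<noteq> 0" and "is_struct ar M" and "is_struct ar N"
  shows "ef_equiv 0 M R [] N R' []"
proof -
  have "[] \<notin> rel_of M s" and "[] \<notin> rel_of N s" for s
    using assms unfolding is_struct_def by (metis list.size(3))+
  then show ?thesis
    by (simp add: partial_iso_def)
qed

lemma eval_hintikka_imp_game_equiv:
  assumes "finite (UNIV :: 's set)" and Y: "is_struct (ar :: 's \<Rightarrow> nat) Y" and X: "is_struct ar X"
    and RY: "lin_order (dom_of Y) RY" and R: "lin_order (dom_of X) R"
    and "0 < k \<or> (\<exists>s. ar s = 0)" and "eval X R e (hintikka ar k Y RY [])"
  shows "game_equiv k ar Y X"
proof -
  have "ef_equiv k Y RY [] X R []"
    using hintikka_imp_ef_equiv[OF assms(1) Y X, of k "[]" "[]" e R RY] assms(6,7) by simp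
  with Y X RY R show ?thesis
    unfolding game_equiv_def by blast
qed

text \<open>The defining sentence is the disjunction of the Hintikka formulas of all ordered structures
  in the component, a finite set by \<open>hintikka_range\<close>.\<close>

lemma game_chain_definable:
  fixes M :: "('s, nat) struct"
  assumes fin: "finite (UNIV :: 's set)" and M: "is_struct ar M" and k: "0 < k \<or> (\<exists>s. ar s = 0)"
  obtains \<chi> where "\<chi> \<in> formulas ar k 0"
    and "\<And>X R. is_struct ar X \<Longrightarrow> lin_order (dom_of X) R \<Longrightarrow>
      holds X R \<chi> \<longleftrightarrow> (M, X) \<in> (game_chain k ar)\<^sup>*"
proof -
  define C where "C = {X. (M, X) \<in> (game_chain k ar)\<^sup>*}"
  define T where "T = {hintikka ar k X R [] | X R. X \<in> C \<and> lin_order (dom_of X) R}"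
  have C_struct: "is_struct ar X" if "X \<in> C" for X
    using that game_chain_is_struct[OF _ M] unfolding C_def by blast
  have "T \<subseteq> hintikka_range ar k 0"
    unfolding T_def using hintikka_in_range[of ar k _ _ "[]"] by auto
  then have fin_T: "finite T"
    using finite_hintikka_range[OF fin] by (rule finite_subset)
  obtain R0 where "lin_order (dom_of M) R0"
    using M exists_lin_order unfolding is_struct_def by blast
  then have ne_T: "T \<noteq> {}"
    unfolding T_def C_def by blast
  have "hintikka ar k X R [] \<in> formulas ar k 0" if "X \<in> C" for X R
    using hintikka_in_formulas[OF fin, of X k "[]" ar R] C_struct[OF that] k
    unfolding is_struct_def by simp
  then have "T \<subseteq> formulas ar k 0"
    unfolding T_def by blast
  then have "big_disj T \<in> formulas ar k 0"
    using big_disj_in_formulas[OF fin_T ne_T] by blast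
  moreover have "holds X R (big_disj T) \<longleftrightarrow> X \<in> C"
    if X: "is_struct ar X" and R: "lin_order (dom_of X) R" for X R
  proof
    assume "holds X R (big_disj T)"
    obtain a where "a \<in> dom_of X"
      using X unfolding is_struct_def by blast
    with \<open>holds X R (big_disj T)\<close> have "eval X R (\<lambda>_. a) (big_disj T)"
      unfolding holds_def by simp
    then have "\<exists>p\<in>T. eval X R (\<lambda>_. a) p"
      unfolding eval_big_disj[OF fin_T ne_T] .
    then obtain Y RY where Y: "Y \<in> C" "lin_order (dom_of Y) RY"
      and "eval X R (\<lambda>_. a) (hintikka ar k Y RY [])"
      unfolding T_def by blast
    then have "(Y, X) \<in> game_chain k ar"
      using eval_hintikka_imp_game_equiv[OF fin C_struct[OF Y(1)] X Y(2) R k] unfolding game_chain_def by blast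
    with Y(1) show "X \<in> C"
      unfolding C_def by simp
  next
    assume "X \<in> C"
    then have "hintikka ar k X R [] \<in> T"
      using R unfolding T_def by blast
    moreover have "eval X R e (hintikka ar k X R [])" for e
      using eval_hintikka[OF fin, of X k "[]" ar e R] X k unfolding is_struct_def by simp
    ultimately show "holds X R (big_disj T)"
      unfolding holds_def eval_big_disj[OF fin_T ne_T] by blast
  qed
  ultimately show ?thesis
    using that unfolding C_def by blast
qed

lemma Th_inv_eq_imp_game_chain:
  fixes M N :: "('s, nat) struct"
  assumes fin: "finite (UNIV :: 's set)" and M: "is_struct ar M" and N: "is_struct ar N"
    and Th: "Th_inv k ar M = Th_inv k ar N"
  shows "(M, N) \<in> (game_chain k ar)\<^sup>*"
proof (cases "0 < k \<or> (\<exists>s. ar s = 0)")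
  case False
  obtain R R' where "lin_order (dom_of M) R" and "lin_order (dom_of N) R'"
    using M N exists_lin_order unfolding is_struct_def by meson
  with M N False ef_equiv_0_Nil[of ar M N R R'] have "game_equiv k ar M N"
    unfolding game_equiv_def by auto
  then show ?thesis
    unfolding game_chain_def by blast
next
  case True
  obtain \<chi> where \<chi>: "\<chi> \<in> formulas ar k 0"
    and chain: "\<And>X R. is_struct ar X \<Longrightarrow> lin_order (dom_of X) R \<Longrightarrow>
      holds X R \<chi> \<longleftrightarrow> (M, X) \<in> (game_chain k ar)\<^sup>*"
    using game_chain_definable[OF fin M True] by blast
  have "ord_inv ar \<chi>"
    unfolding ord_inv_def using chain by blast
  moreover have "\<forall>R. lin_order (dom_of M) R \<longrightarrow> holds M R \<chi>"
    using chain[OF M] by simp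
  ultimately have "\<chi> \<in> Th_inv k ar N"
    using \<chi> Th mem_Th_inv_iff[OF M] by blast
  then obtain R where "lin_order (dom_of N) R" and "holds N R \<chi>"
    unfolding Th_inv_def by blast
  then show ?thesis
    using chain[OF N] by blast
qed

section \<open>Products\<close>

lemma lin_orderD: "lin_order D R \<Longrightarrow> trans R \<and> irrefl R \<and> total_on D R"
  unfolding lin_order_def strict_linear_order_on_def by blast

lemma lin_order_Restr:
  assumes "trans S" and "irrefl S" and "total_on D S"
  shows "lin_order D (Restr S D)"
  using assms unfolding lin_order_def strict_linear_order_on_def trans_def irrefl_def total_on_def
  by blast

definition lex_order :: "'a rel \<Rightarrow> 'b rel \<Rightarrow> 'a set \<Rightarrow> 'b set \<Rightarrow> ('a \<times> 'b) rel" where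
  "lex_order R Q DA DB = Restr (R <*lex*> Q) (DA \<times> DB)"

lemma lin_order_lex_order:
  "lin_order DA R \<Longrightarrow> lin_order DB Q \<Longrightarrow> lin_order (DA \<times> DB) (lex_order R Q DA DB)"
  unfolding lex_order_def by (intro lin_order_Restr) (simp_all add: lin_orderD)

lemma dom_direct_prod [simp]: "dom_of (direct_prod A B) = dom_of A \<times> dom_of B"
  and rel_direct_prod [simp]:
    "rel_of (direct_prod A B) s = {t. map fst t \<in> rel_of A s \<and> map snd t \<in> rel_of B s}"
  unfolding direct_prod_def dom_of_def rel_of_def by simp_all

lemma is_struct_direct_prod:
  assumes "is_struct ar A" and "is_struct ar B"
  shows "is_struct ar (direct_prod A B)"
proof -
  have "length t = ar s \<and> set t \<subseteq> dom_of A \<times> dom_of B"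
    if "map fst t \<in> rel_of A s" and "map snd t \<in> rel_of B s" for s t
  proof -
    have "length (map fst t) = ar s" "set (map fst t) \<subseteq> dom_of A" "set (map snd t) \<subseteq> dom_of B"
      using assms that unfolding is_struct_def by blast+
    then show ?thesis
      by (auto simp: subset_iff)
  qed
  with assms show ?thesis
    unfolding is_struct_def by auto
qed

lemma direct_prod_pair_iff:
  assumes A: "partial_iso A R (map fst xs) A' R' (map fst ys)"
    and B: "partial_iso B Q (map snd xs) B' Q' (map snd ys)"
    and "i < length xs" and "j < length xs"
  shows "(xs!i = xs!j \<longleftrightarrow> ys!i = ys!j) \<and>
    ((xs!i, xs!j) \<in> lex_order R Q (dom_of A) (dom_of B) \<longleftrightarrow>
     (ys!i, ys!j) \<in> lex_order R' Q' (dom_of A') (dom_of B'))"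
proof -
  have len: "length xs = length ys"
    using A unfolding partial_iso_def by simp
  have "xs!i \<in> dom_of A \<times> dom_of B" "xs!j \<in> dom_of A \<times> dom_of B"
    "ys!i \<in> dom_of A' \<times> dom_of B'" "ys!j \<in> dom_of A' \<times> dom_of B'"
    using A B assms(3,4) len unfolding partial_iso_def by (auto simp: mem_Times_iff)
  moreover have "(fst (xs!i) = fst (xs!j) \<longleftrightarrow> fst (ys!i) = fst (ys!j)) \<and>
      ((fst (xs!i), fst (xs!j)) \<in> R \<longleftrightarrow> (fst (ys!i), fst (ys!j)) \<in> R')"
    using A assms(3,4) len unfolding partial_iso_def by auto
  moreover have "(snd (xs!i) = snd (xs!j) \<longleftrightarrow> snd (ys!i) = snd (ys!j)) \<and>
      ((snd (xs!i), snd (xs!j)) \<in> Q \<longleftrightarrow> (snd (ys!i), snd (ys!j)) \<in> Q')"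
    using B assms(3,4) len unfolding partial_iso_def by auto
  ultimately show ?thesis
    unfolding lex_order_def by (cases "xs!i"; cases "xs!j"; cases "ys!i"; cases "ys!j") auto
qed

lemma direct_prod_tuple_iff:
  assumes A: "partial_iso A R (map fst xs) A' R' (map fst ys)"
    and B: "partial_iso B Q (map snd xs) B' Q' (map snd ys)"
    and ix: "set ix \<subseteq> {..<length xs}"
  shows "map ((!) xs) ix \<in> rel_of (direct_prod A B) s \<longleftrightarrow> map ((!) ys) ix \<in> rel_of (direct_prod A' B') s"
proof -
  have len: "length xs = length ys"
    using A unfolding partial_iso_def by simp
  have components: "map fst (map ((!) xs) ix) = map ((!) (map fst xs)) ix"
    "map snd (map ((!) xs) ix) = map ((!) (map snd xs)) ix"
    "map fst (map ((!) ys) ix) = map ((!) (map fst ys)) ix"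
    "map snd (map ((!) ys) ix) = map ((!) (map snd ys)) ix"
    using ix len by auto
  have "map ((!) (map fst xs)) ix \<in> rel_of A s \<longleftrightarrow> map ((!) (map fst ys)) ix \<in> rel_of A' s"
    and "map ((!) (map snd xs)) ix \<in> rel_of B s \<longleftrightarrow> map ((!) (map snd ys)) ix \<in> rel_of B' s"
    using A B ix unfolding partial_iso_def by auto
  then show ?thesis
    unfolding rel_direct_prod mem_Collect_eq components by blast
qed

lemma partial_iso_direct_prod:
  assumes A: "partial_iso A R (map fst xs) A' R' (map fst ys)"
    and B: "partial_iso B Q (map snd xs) B' Q' (map snd ys)"
  shows "partial_iso (direct_prod A B) (lex_order R Q (dom_of A) (dom_of B)) xs
    (direct_prod A' B') (lex_order R' Q' (dom_of A') (dom_of B')) ys"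
proof -
  have "length xs = length ys"
    and "set xs \<subseteq> dom_of A \<times> dom_of B" "set ys \<subseteq> dom_of A' \<times> dom_of B'"
    using A B unfolding partial_iso_def by (auto simp: subset_iff)
  then show ?thesis
    using direct_prod_pair_iff[OF A B] direct_prod_tuple_iff[OF A B] unfolding partial_iso_def by simp
qed

lemma direct_prod_forth:
  assumes "ef_equiv (Suc k) A R (map fst xs) A' R' (map fst ys)"
    and "ef_equiv (Suc k) B Q (map snd xs) B' Q' (map snd ys)"
    and "c \<in> dom_of (direct_prod A B)"
  obtains d where "d \<in> dom_of (direct_prod A' B')"
    and "ef_equiv k A R (map fst (xs @ [c])) A' R' (map fst (ys @ [d]))"
    and "ef_equiv k B Q (map snd (xs @ [c])) B' Q' (map snd (ys @ [d]))"
proof -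
  obtain a b where c: "c = (a, b)" "a \<in> dom_of A" "b \<in> dom_of B"
    using assms(3) by auto
  obtain a' where "a' \<in> dom_of A'" "ef_equiv k A R (map fst xs @ [a]) A' R' (map fst ys @ [a'])"
    using assms(1) c by auto
  moreover obtain b' where "b' \<in> dom_of B'" "ef_equiv k B Q (map snd xs @ [b]) B' Q' (map snd ys @ [b'])"
    using assms(2) c by auto
  ultimately show ?thesis
    using that[of "(a', b')"] c by simp
qed

lemma ef_equiv_direct_prod:
  "ef_equiv k A R (map fst xs) A' R' (map fst ys) \<Longrightarrow> ef_equiv k B Q (map snd xs) B' Q' (map snd ys) \<Longrightarrow>
   ef_equiv k (direct_prod A B) (lex_order R Q (dom_of A) (dom_of B)) xs
     (direct_prod A' B') (lex_order R' Q' (dom_of A') (dom_of B')) ys"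
proof (induction k arbitrary: xs ys)
  case 0
  then show ?case
    by (simp add: partial_iso_direct_prod)
next
  case (Suc k)
  let ?M = "direct_prod A B" and ?N = "direct_prod A' B'"
  let ?R = "lex_order R Q (dom_of A) (dom_of B)" and ?R' = "lex_order R' Q' (dom_of A') (dom_of B')"
  have "\<exists>d\<in>dom_of ?N. ef_equiv k ?M ?R (xs @ [c]) ?N ?R' (ys @ [d])" if "c \<in> dom_of ?M" for c
    using direct_prod_forth[OF Suc.prems that] Suc.IH by metis
  moreover have "\<exists>c\<in>dom_of ?M. ef_equiv k ?M ?R (xs @ [c]) ?N ?R' (ys @ [d])" if "d \<in> dom_of ?N" for d
    using direct_prod_forth[OF Suc.prems[THEN ef_equiv_sym] that] Suc.IH ef_equiv_sym by metis
  ultimately show ?case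
    using partial_iso_direct_prod[OF Suc.prems[THEN ef_equiv_imp_partial_iso]] by simp
qed

lemma game_equiv_direct_prod:
  assumes "game_equiv k ar A A'" and "game_equiv k ar B B'"
  shows "game_equiv k ar (direct_prod A B) (direct_prod A' B')"
proof -
  obtain R R' where A: "is_struct ar A" "is_struct ar A'"
    "lin_order (dom_of A) R" "lin_order (dom_of A') R'" "ef_equiv k A R [] A' R' []"
    using assms(1) unfolding game_equiv_def by blast
  obtain Q Q' where B: "is_struct ar B" "is_struct ar B'"
    "lin_order (dom_of B) Q" "lin_order (dom_of B') Q'" "ef_equiv k B Q [] B' Q' []"
    using assms(2) unfolding game_equiv_def by blast
  have "ef_equiv k (direct_prod A B) (lex_order R Q (dom_of A) (dom_of B)) []
      (direct_prod A' B') (lex_order R' Q' (dom_of A') (dom_of B')) []"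
    using ef_equiv_direct_prod[of k A R "[]" A' R' "[]"] A(5) B(5) by simp
  then show ?thesis
    unfolding game_equiv_def dom_direct_prod
    using is_struct_direct_prod[OF A(1) B(1)] is_struct_direct_prod[OF A(2) B(2)]
      lin_order_lex_order[OF A(3) B(3)] lin_order_lex_order[OF A(4) B(4)] by blast
qed

section \<open>Disjoint unions\<close>

definition sum_order :: "'a rel \<Rightarrow> 'b rel \<Rightarrow> 'a set \<Rightarrow> 'b set \<Rightarrow> ('a + 'b) rel" where
  "sum_order R Q DA DB = map_prod Inl Inl ` R \<union> map_prod Inr Inr ` Q \<union> Inl ` DA \<times> Inr ` DB"

lemma sum_order_simps [simp]:
  "(Inl a, Inl a') \<in> sum_order R Q DA DB \<longleftrightarrow> (a, a') \<in> R"
  "(Inr b, Inr b') \<in> sum_order R Q DA DB \<longleftrightarrow> (b, b') \<in> Q"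
  "(Inl a, Inr b) \<in> sum_order R Q DA DB \<longleftrightarrow> a \<in> DA \<and> b \<in> DB"
  "(Inr b, Inl a) \<notin> sum_order R Q DA DB"
  unfolding sum_order_def by auto

lemma lin_order_sum_order:
  assumes "lin_order DA R" and "lin_order DB Q"
  shows "lin_order (Inl ` DA \<union> Inr ` DB) (sum_order R Q DA DB)"
proof -
  have R: "R \<subseteq> DA \<times> DA" "trans R" "irrefl R" "total_on DA R"
    and Q: "Q \<subseteq> DB \<times> DB" "trans Q" "irrefl Q" "total_on DB Q"
    using assms unfolding lin_order_def strict_linear_order_on_def by auto
  let ?S = "sum_order R Q DA DB"
  have "trans ?S"
  proof (rule transI)
    fix x y z
    assume "(x, y) \<in> ?S" and "(y, z) \<in> ?S"
    with R Q show "(x, z) \<in> ?S"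
      by (cases x; cases y; cases z) (auto dest: transD)
  qed
  moreover have "irrefl ?S"
    using R(3) Q(3) unfolding irrefl_def by (metis sum.exhaust sum_order_simps(1,2))
  moreover have "total_on (Inl ` DA \<union> Inr ` DB) ?S"
    using R(4) Q(4) unfolding total_on_def by (auto; blast)
  moreover have "?S \<subseteq> (Inl ` DA \<union> Inr ` DB) \<times> (Inl ` DA \<union> Inr ` DB)"
    using R(1) Q(1) unfolding sum_order_def by auto
  ultimately show ?thesis
    unfolding lin_order_def strict_linear_order_on_def by blast
qed

lemma dom_disj_union [simp]: "dom_of (disj_union A B) = Inl ` dom_of A \<union> Inr ` dom_of B"
  unfolding disj_union_def dom_of_def by simp

lemma rel_disj_union [simp]:
  "rel_of (disj_union A B) (Inl r) = map Inl ` rel_of A r \<union> map Inr ` rel_of B r"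
  "rel_of (disj_union A B) (Inr True) = {[x] | x. x \<in> Inl ` dom_of A}"
  "rel_of (disj_union A B) (Inr False) = {[x] | x. x \<in> Inr ` dom_of B}"
  unfolding disj_union_def dom_of_def rel_of_def by auto

lemma is_struct_disj_union:
  assumes "is_struct ar A" and "is_struct ar B"
  shows "is_struct (ar_du ar) (disj_union A B)"
proof -
  have "length t = ar_du ar s \<and> set t \<subseteq> dom_of (disj_union A B)"
    if "t \<in> rel_of (disj_union A B) s" for s t
  proof (cases s)
    case (Inl r)
    have "\<forall>t\<in>rel_of A r. length t = ar r \<and> set t \<subseteq> dom_of A"
      and "\<forall>t\<in>rel_of B r. length t = ar r \<and> set t \<subseteq> dom_of B"
      using assms unfolding is_struct_def by blast+
    with that Inl show ?thesis
      unfolding ar_du_def by fastforce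
  next
    case (Inr c)
    with that show ?thesis
      unfolding ar_du_def by (cases c) auto
  qed
  with assms show ?thesis
    unfolding is_struct_def by auto
qed

definition count_before :: "('a \<Rightarrow> bool) \<Rightarrow> 'a list \<Rightarrow> nat \<Rightarrow> nat" where
  "count_before P xs i = length (filter P (take i xs))"

lemma nth_filter_count_before:
  "i < length xs \<Longrightarrow> P (xs ! i) \<Longrightarrow>
    count_before P xs i < length (filter P xs) \<and> filter P xs ! count_before P xs i = xs ! i"
proof (induction xs arbitrary: i)
  case (Cons x xs)
  then show ?case
    unfolding count_before_def by (cases i) auto
qed simp

lemma count_before_cong:
  assumes "map P xs = map Q ys"
  shows "count_before P xs i = count_before Q ys i"
proof -
  have "map P (take i xs) = map Q (take i ys)"
    using assms by (metis take_map)
  then have "length (filter id (map P (take i xs))) = length (filter id (map Q (take i ys)))"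
    by simp
  then show ?thesis
    unfolding count_before_def by (simp add: filter_map comp_def)
qed

definition lefts :: "('a + 'b) list \<Rightarrow> 'a list" where
  "lefts xs = map projl (filter isl xs)"

definition rights :: "('a + 'b) list \<Rightarrow> 'b list" where
  "rights xs = map projr (filter (\<lambda>x. \<not> isl x) xs)"

lemma lefts_snoc [simp]: "lefts (xs @ [Inl a]) = lefts xs @ [a]" "lefts (xs @ [Inr b]) = lefts xs"
  and rights_snoc [simp]: "rights (xs @ [Inl a]) = rights xs" "rights (xs @ [Inr b]) = rights xs @ [b]"
  unfolding lefts_def rights_def by simp_all

lemma nth_via_filter:
  assumes "i < length xs" and "P (xs ! i)" and "\<And>x. P x \<Longrightarrow> g (h x) = x"
  shows "count_before P xs i < length (map h (filter P xs))"
    and "xs ! i = g (map h (filter P xs) ! count_before P xs i)"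
  using nth_filter_count_before[of i xs P] assms by simp_all

lemma nth_sum_list_cases:
  assumes pat: "map isl xs = map isl ys" and i: "i < length xs"
  obtains (Inl) l where "l < length (lefts xs)" "xs ! i = Inl (lefts xs ! l)" "ys ! i = Inl (lefts ys ! l)"
    | (Inr) r where "r < length (rights xs)" "xs ! i = Inr (rights xs ! r)" "ys ! i = Inr (rights ys ! r)"
proof -
  have i': "i < length ys"
    using pat i by (metis length_map)
  have isl_eq: "isl (ys ! i) \<longleftrightarrow> isl (xs ! i)"
    using pat i i' by (metis nth_map)
  have not_isl: "map (\<lambda>x. \<not> isl x) xs = map (\<lambda>x. \<not> isl x) ys"
    using arg_cong[OF pat, of "map Not"] by (simp add: comp_def)
  show ?thesis
  proof (cases "isl (xs ! i)")
    case True
    with isl_eq show ?thesis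
      using Inl nth_via_filter[OF i, of isl Inl projl] nth_via_filter[OF i', of isl Inl projl]
      unfolding lefts_def count_before_cong[OF pat] by simp
  next
    case False
    with isl_eq show ?thesis
      using Inr nth_via_filter[OF i, of "\<lambda>x. \<not> isl x" Inr projr]
        nth_via_filter[OF i', of "\<lambda>x. \<not> isl x" Inr projr]
      unfolding rights_def count_before_cong[OF not_isl] by simp
  qed
qed

lemma map_nth_in_map_image_iff:
  assumes range: "\<And>x. P x \<longleftrightarrow> x \<in> range g" and inv: "\<And>y. h (g y) = y"
    and ix: "set ix \<subseteq> {..<length xs}"
  shows "map ((!) xs) ix \<in> map g ` S \<longleftrightarrow>
    (\<forall>i\<in>set ix. P (xs ! i)) \<and> map ((!) (map h (filter P xs))) (map (count_before P xs) ix) \<in> S"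
proof -
  have gh: "g (h x) = x" if "P x" for x
    using that range inv by auto
  have proj: "map ((!) (map h (filter P xs))) (map (count_before P xs) ix) = map h (map ((!) xs) ix)"
    if "\<forall>i\<in>set ix. P (xs ! i)"
    using that ix nth_filter_count_before[of _ xs P] by auto
  show ?thesis
  proof
    assume "map ((!) xs) ix \<in> map g ` S"
    then obtain t where t: "t \<in> S" "map ((!) xs) ix = map g t"
      by blast
    then have all: "\<forall>i\<in>set ix. P (xs ! i)"
      using range by (auto dest: map_eq_imp_length_eq simp: list_eq_iff_nth_eq in_set_conv_nth)
    have "map h (map ((!) xs) ix) = t"
      unfolding t(2) by (simp add: inv map_idI)
    with t(1) have "map ((!) (map h (filter P xs))) (map (count_before P xs) ix) \<in> S"
      unfolding proj[OF all] by simp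
    with all show "(\<forall>i\<in>set ix. P (xs ! i)) \<and>
        map ((!) (map h (filter P xs))) (map (count_before P xs) ix) \<in> S"
      by blast
  next
    assume "(\<forall>i\<in>set ix. P (xs ! i)) \<and>
        map ((!) (map h (filter P xs))) (map (count_before P xs) ix) \<in> S"
    moreover from this have "map ((!) xs) ix = map g (map h (map ((!) xs) ix))"
      using gh by simp
    ultimately show "map ((!) xs) ix \<in> map g ` S"
      using proj by (metis imageI)
  qed
qed

lemma projection_tuple_iff:
  assumes pat: "map P xs = map P' ys"
    and iso: "partial_iso A R (map h (filter P xs)) A' R' (map h' (filter P' ys))"
    and ix: "set ix \<subseteq> {..<length xs}"
  shows "(\<forall>i\<in>set ix. P (xs ! i)) \<and> map ((!) (map h (filter P xs))) (map (count_before P xs) ix) \<in> rel_of A r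
    \<longleftrightarrow> (\<forall>i\<in>set ix. P' (ys ! i)) \<and> map ((!) (map h' (filter P' ys))) (map (count_before P' ys) ix) \<in> rel_of A' r"
proof -
  have len: "length xs = length ys"
    using pat by (metis length_map)
  have same_side: "(\<forall>i\<in>set ix. P (xs ! i)) \<longleftrightarrow> (\<forall>i\<in>set ix. P' (ys ! i))"
    using pat ix len by (metis (no_types, lifting) lessThan_iff nth_map subsetD)
  have "map (count_before P xs) ix = map (count_before P' ys) ix"
    using count_before_cong[OF pat] by simp
  moreover have "set (map (count_before P xs) ix) \<subseteq> {..<length (map h (filter P xs))}"
    if "\<forall>i\<in>set ix. P (xs ! i)"
    using that ix nth_filter_count_before[of _ xs P] by auto
  ultimately show ?thesis
    using same_side iso unfolding partial_iso_def by metis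
qed

lemma map_nth_in_map_Inl_iff:
  "set ix \<subseteq> {..<length xs} \<Longrightarrow> map ((!) xs) ix \<in> map Inl ` S \<longleftrightarrow>
    (\<forall>i\<in>set ix. isl (xs ! i)) \<and> map ((!) (lefts xs)) (map (count_before isl xs) ix) \<in> S"
  unfolding lefts_def by (rule map_nth_in_map_image_iff) (auto simp: isl_def)

lemma map_nth_in_map_Inr_iff:
  "set ix \<subseteq> {..<length xs} \<Longrightarrow> map ((!) xs) ix \<in> map Inr ` S \<longleftrightarrow>
    (\<forall>i\<in>set ix. \<not> isl (xs ! i)) \<and>
      map ((!) (rights xs)) (map (count_before (\<lambda>x. \<not> isl x) xs) ix) \<in> S"
  unfolding rights_def by (rule map_nth_in_map_image_iff) (auto simp: isl_def, metis rangeI sum.exhaust)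

lemma set_sum_list_subset:
  assumes "set (lefts xs) \<subseteq> DA" and "set (rights xs) \<subseteq> DB"
  shows "set xs \<subseteq> Inl ` DA \<union> Inr ` DB"
proof
  fix x
  assume "x \<in> set xs"
  with assms show "x \<in> Inl ` DA \<union> Inr ` DB"
    unfolding lefts_def rights_def by (cases x) force+
qed

lemma map_nth_in_singletons_iff:
  "map ((!) xs) ix \<in> {[x] | x. x \<in> D} \<longleftrightarrow> (\<exists>i. ix = [i] \<and> xs ! i \<in> D)"
  by (cases ix) auto

lemma disj_union_tuple_iff:
  assumes pat: "map isl xs = map isl ys"
    and A: "partial_iso A R (lefts xs) A' R' (lefts ys)"
    and B: "partial_iso B Q (rights xs) B' Q' (rights ys)"
    and ix: "set ix \<subseteq> {..<length xs}"
  shows "map ((!) xs) ix \<in> rel_of (disj_union A B) s \<longleftrightarrow> map ((!) ys) ix \<in> rel_of (disj_union A' B') s"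
proof -
  have len: "length xs = length ys"
    using pat by (metis length_map)
  with ix have ix': "set ix \<subseteq> {..<length ys}"
    by simp
  show ?thesis
  proof (cases s)
    case (Inl r)
    have not_isl: "map (\<lambda>x. \<not> isl x) xs = map (\<lambda>x. \<not> isl x) ys"
      using arg_cong[OF pat, of "map Not"] by (simp add: comp_def)
    show ?thesis
      unfolding Inl rel_disj_union Un_iff map_nth_in_map_Inl_iff[OF ix] map_nth_in_map_Inl_iff[OF ix']
        map_nth_in_map_Inr_iff[OF ix] map_nth_in_map_Inr_iff[OF ix']
      using projection_tuple_iff[OF pat A[unfolded lefts_def] ix]
        projection_tuple_iff[OF not_isl B[unfolded rights_def] ix]
      unfolding lefts_def rights_def by blast
  next
    case (Inr c)
    have "set xs \<subseteq> Inl ` dom_of A \<union> Inr ` dom_of B" "set ys \<subseteq> Inl ` dom_of A' \<union> Inr ` dom_of B'"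
      using A B by (simp_all add: partial_iso_def set_sum_list_subset)
    then have "(xs ! i \<in> Inl ` dom_of A \<longleftrightarrow> ys ! i \<in> Inl ` dom_of A') \<and>
        (xs ! i \<in> Inr ` dom_of B \<longleftrightarrow> ys ! i \<in> Inr ` dom_of B')" if "i \<in> set ix" for i
    proof -
      have i: "i < length xs" "i < length ys"
        using that ix len by auto
      with \<open>set xs \<subseteq> _\<close> \<open>set ys \<subseteq> _\<close> have "xs ! i \<in> Inl ` dom_of A \<union> Inr ` dom_of B"
        and "ys ! i \<in> Inl ` dom_of A' \<union> Inr ` dom_of B'"
        by (meson nth_mem subsetD)+
      moreover have "isl (xs ! i) \<longleftrightarrow> isl (ys ! i)"
        using pat i by (metis nth_map)
      ultimately show ?thesis
        by (cases "xs ! i"; cases "ys ! i") auto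
    qed
    with Inr show ?thesis
      by (cases c) (auto simp: map_nth_in_singletons_iff)
  qed
qed

lemma disj_union_pair_iff:
  assumes pat: "map isl xs = map isl ys"
    and A: "partial_iso A R (lefts xs) A' R' (lefts ys)"
    and B: "partial_iso B Q (rights xs) B' Q' (rights ys)"
    and i: "i < length xs" and j: "j < length xs"
  shows "(xs!i = xs!j \<longleftrightarrow> ys!i = ys!j) \<and>
    ((xs!i, xs!j) \<in> sum_order R Q (dom_of A) (dom_of B) \<longleftrightarrow>
     (ys!i, ys!j) \<in> sum_order R' Q' (dom_of A') (dom_of B'))"
proof -
  have in_dom: "lefts xs ! l \<in> dom_of A" "lefts ys ! l \<in> dom_of A'" if "l < length (lefts xs)" for l
    using that A unfolding partial_iso_def by (metis nth_mem subsetD)+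
  have in_dom': "rights xs ! r \<in> dom_of B" "rights ys ! r \<in> dom_of B'" if "r < length (rights xs)" for r
    using that B unfolding partial_iso_def by (metis nth_mem subsetD)+
  from pat i show ?thesis
  proof (cases rule: nth_sum_list_cases)
    case (Inl l)
    from pat j show ?thesis
    proof (cases rule: nth_sum_list_cases)
      case (Inl l')
      with \<open>l < _\<close> \<open>xs ! i = _\<close> \<open>ys ! i = _\<close> A show ?thesis
        unfolding partial_iso_def by simp
    next
      case (Inr r')
      with \<open>l < _\<close> \<open>xs ! i = _\<close> \<open>ys ! i = _\<close> in_dom in_dom' show ?thesis
        by simp
    qed
  next
    case (Inr r)
    from pat j show ?thesis
    proof (cases rule: nth_sum_list_cases)
      case (Inl l')
      with \<open>xs ! i = _\<close> \<open>ys ! i = _\<close> show ?thesis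
        by simp
    next
      case (Inr r')
      with \<open>r < _\<close> \<open>xs ! i = _\<close> \<open>ys ! i = _\<close> B show ?thesis
        unfolding partial_iso_def by simp
    qed
  qed
qed

lemma partial_iso_disj_union:
  assumes pat: "map isl xs = map isl ys"
    and A: "partial_iso A R (lefts xs) A' R' (lefts ys)"
    and B: "partial_iso B Q (rights xs) B' Q' (rights ys)"
  shows "partial_iso (disj_union A B) (sum_order R Q (dom_of A) (dom_of B)) xs
    (disj_union A' B') (sum_order R' Q' (dom_of A') (dom_of B')) ys"
proof -
  have "length xs = length ys"
    using pat by (metis length_map)
  moreover have "set xs \<subseteq> Inl ` dom_of A \<union> Inr ` dom_of B" "set ys \<subseteq> Inl ` dom_of A' \<union> Inr ` dom_of B'"
    using A B by (simp_all add: partial_iso_def set_sum_list_subset)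
  ultimately show ?thesis
    using disj_union_pair_iff[OF pat A B] disj_union_tuple_iff[OF pat A B]
    unfolding partial_iso_def by simp
qed

lemma disj_union_forth:
  assumes A: "ef_equiv (Suc k) A R (lefts xs) A' R' (lefts ys)"
    and B: "ef_equiv (Suc k) B Q (rights xs) B' Q' (rights ys)"
    and c: "c \<in> dom_of (disj_union A B)"
  obtains d where "d \<in> dom_of (disj_union A' B')" and "isl d \<longleftrightarrow> isl c"
    and "ef_equiv k A R (lefts (xs @ [c])) A' R' (lefts (ys @ [d]))"
    and "ef_equiv k B Q (rights (xs @ [c])) B' Q' (rights (ys @ [d]))"
proof (cases c)
  case (Inl a)
  with c obtain a' where "a' \<in> dom_of A'" "ef_equiv k A R (lefts xs @ [a]) A' R' (lefts ys @ [a'])"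
    using A by auto
  with Inl ef_equiv_SucD[OF B] show ?thesis
    using that[of "Inl a'"] by simp
next
  case (Inr b)
  with c obtain b' where "b' \<in> dom_of B'" "ef_equiv k B Q (rights xs @ [b]) B' Q' (rights ys @ [b'])"
    using B by auto
  with Inr ef_equiv_SucD[OF A] show ?thesis
    using that[of "Inr b'"] by simp
qed

lemma ef_equiv_disj_union:
  "map isl xs = map isl ys \<Longrightarrow>
   ef_equiv k A R (lefts xs) A' R' (lefts ys) \<Longrightarrow> ef_equiv k B Q (rights xs) B' Q' (rights ys) \<Longrightarrow>
   ef_equiv k (disj_union A B) (sum_order R Q (dom_of A) (dom_of B)) xs
     (disj_union A' B') (sum_order R' Q' (dom_of A') (dom_of B')) ys"
proof (induction k arbitrary: xs ys)
  case 0
  then show ?case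
    by (simp add: partial_iso_disj_union)
next
  case (Suc k)
  let ?M = "disj_union A B" and ?N = "disj_union A' B'"
  let ?R = "sum_order R Q (dom_of A) (dom_of B)" and ?R' = "sum_order R' Q' (dom_of A') (dom_of B')"
  have "\<exists>d\<in>dom_of ?N. ef_equiv k ?M ?R (xs @ [c]) ?N ?R' (ys @ [d])" if c: "c \<in> dom_of ?M" for c
  proof -
    obtain d where "d \<in> dom_of ?N" "isl d \<longleftrightarrow> isl c"
      "ef_equiv k A R (lefts (xs @ [c])) A' R' (lefts (ys @ [d]))"
      "ef_equiv k B Q (rights (xs @ [c])) B' Q' (rights (ys @ [d]))"
      using disj_union_forth[OF Suc.prems(2,3) c] by blast
    with Suc.prems(1) Suc.IH[of "xs @ [c]" "ys @ [d]"] show ?thesis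
      by auto
  qed
  moreover have "\<exists>c\<in>dom_of ?M. ef_equiv k ?M ?R (xs @ [c]) ?N ?R' (ys @ [d])" if d: "d \<in> dom_of ?N" for d
  proof -
    obtain c where "c \<in> dom_of ?M" "isl c \<longleftrightarrow> isl d"
      "ef_equiv k A' R' (lefts (ys @ [d])) A R (lefts (xs @ [c]))"
      "ef_equiv k B' Q' (rights (ys @ [d])) B Q (rights (xs @ [c]))"
      using disj_union_forth[OF Suc.prems(2,3)[THEN ef_equiv_sym] d] by blast
    with Suc.prems(1) Suc.IH[of "xs @ [c]" "ys @ [d]"] show ?thesis
      by (auto dest: ef_equiv_sym)
  qed
  ultimately show ?case
    using partial_iso_disj_union[OF Suc.prems(1) Suc.prems(2,3)[THEN ef_equiv_imp_partial_iso]] by simp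
qed

lemma game_equiv_disj_union:
  assumes "game_equiv k ar A A'" and "game_equiv k ar B B'"
  shows "game_equiv k (ar_du ar) (disj_union A B) (disj_union A' B')"
proof -
  obtain R R' where A: "is_struct ar A" "is_struct ar A'"
    "lin_order (dom_of A) R" "lin_order (dom_of A') R'" "ef_equiv k A R [] A' R' []"
    using assms(1) unfolding game_equiv_def by blast
  obtain Q Q' where B: "is_struct ar B" "is_struct ar B'"
    "lin_order (dom_of B) Q" "lin_order (dom_of B') Q'" "ef_equiv k B Q [] B' Q' []"
    using assms(2) unfolding game_equiv_def by blast
  have "ef_equiv k (disj_union A B) (sum_order R Q (dom_of A) (dom_of B)) []
      (disj_union A' B') (sum_order R' Q' (dom_of A') (dom_of B')) []"
    using ef_equiv_disj_union[of "[]" "[]"] A(5) B(5) by (simp add: lefts_def rights_def)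
  then show ?thesis
    unfolding game_equiv_def dom_disj_union
    using is_struct_disj_union[OF A(1) B(1)] is_struct_disj_union[OF A(2) B(2)]
      lin_order_sum_order[OF A(3) B(3)] lin_order_sum_order[OF A(4) B(4)] by blast
qed

section \<open>Composing chains\<close>

lemma game_chain_cong:
  fixes F :: "('s, nat) struct \<Rightarrow> ('s, nat) struct \<Rightarrow> 'r"
  assumes "(A, A') \<in> (game_chain k ar)\<^sup>*" and "(B, B') \<in> (game_chain k ar)\<^sup>*"
    and "is_struct ar A" and "is_struct ar B"
    and F: "\<And>A A' B B'. game_equiv k ar A A' \<Longrightarrow> game_equiv k ar B B' \<Longrightarrow> F A B = F A' B'"
  shows "F A B = F A' B'"
proof -
  have "F A B = F A' B"
    using assms(1)
  proof (induction rule: rtrancl_induct)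
    case (step Y Z)
    then show ?case
      using F[OF _ game_equiv_refl[OF assms(4)], of Y Z] unfolding game_chain_def by simp
  qed simp
  also have "\<dots> = F A' B'"
    using assms(2)
  proof (induction rule: rtrancl_induct)
    case (step Y Z)
    have "is_struct ar A'"
      using game_chain_is_struct[OF assms(1,3)] .
    with step show ?case
      using F[OF game_equiv_refl[OF \<open>is_struct ar A'\<close>], of Y Z] unfolding game_chain_def by simp
  qed simp
  finally show ?thesis .
qed

lemma Th_inv_eq_imp_nat_game_chain:
  fixes A1 :: "('s, 'a) struct" and A2 :: "('s, 'b) struct"
  assumes "finite (UNIV :: 's set)" and "is_struct ar A1" and "is_struct ar A2"
    and "Th_inv k ar A1 = Th_inv k ar A2"
  obtains A1' A2' :: "('s, nat) struct"
  where "game_equiv k ar A1 A1'" and "game_equiv k ar A2 A2'" and "(A1', A2') \<in> (game_chain k ar)\<^sup>*"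
proof -
  obtain A1' A2' :: "('s, nat) struct" where A1': "game_equiv k ar A1 A1'" and A2': "game_equiv k ar A2 A2'"
    using game_equiv_nat_copy[OF assms(2)] game_equiv_nat_copy[OF assms(3)] by metis
  then have "is_struct ar A1'" "is_struct ar A2'" and "Th_inv k ar A1' = Th_inv k ar A2'"
    using assms(4) game_equiv_Th_inv_eq unfolding game_equiv_def by metis+
  with A1' A2' show ?thesis
    using that Th_inv_eq_imp_game_chain[OF assms(1)] by blast
qed

theorem theorem5p1:
  fixes k :: nat and ar :: "'s \<Rightarrow> nat"
    and A1 :: "('s, 'a) struct" and A2 :: "('s, 'b) struct"
    and B1 :: "('s, 'c) struct" and B2 :: "('s, 'd) struct"
  assumes "finite (UNIV :: 's set)"
    and "is_struct ar A1" and "is_struct ar A2"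
    and "is_struct ar B1" and "is_struct ar B2"
    and "Th_inv k ar A1 = Th_inv k ar A2"
    and "Th_inv k ar B1 = Th_inv k ar B2"
  shows "Th_inv k (ar_du ar) (disj_union A1 B1) = Th_inv k (ar_du ar) (disj_union A2 B2)
       \<and> Th_inv k ar (direct_prod A1 B1) = Th_inv k ar (direct_prod A2 B2)"
proof -
  obtain A1' A2' where A1: "game_equiv k ar A1 A1'" and A2: "game_equiv k ar A2 A2'"
    and A: "(A1', A2') \<in> (game_chain k ar)\<^sup>*"
    using Th_inv_eq_imp_nat_game_chain[OF assms(1,2,3,6)] .
  obtain B1' B2' where B1: "game_equiv k ar B1 B1'" and B2: "game_equiv k ar B2 B2'"
    and B: "(B1', B2') \<in> (game_chain k ar)\<^sup>*"
    using Th_inv_eq_imp_nat_game_chain[OF assms(1,4,5,7)] .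
  have "is_struct ar A1'" "is_struct ar B1'"
    using A1 B1 unfolding game_equiv_def by simp_all
  note chain = game_chain_cong[OF A B this]
  have "Th_inv k (ar_du ar) (disj_union A1 B1) = Th_inv k (ar_du ar) (disj_union A1' B1')"
    using game_equiv_Th_inv_eq[OF game_equiv_disj_union[OF A1 B1]] .
  also have "\<dots> = Th_inv k (ar_du ar) (disj_union A2' B2')"
    by (rule chain) (intro game_equiv_Th_inv_eq game_equiv_disj_union)
  also have "\<dots> = Th_inv k (ar_du ar) (disj_union A2 B2)"
    using game_equiv_Th_inv_eq[OF game_equiv_disj_union[OF A2 B2]] by simp
  finally have disj_union: "Th_inv k (ar_du ar) (disj_union A1 B1) = Th_inv k (ar_du ar) (disj_union A2 B2)" .
  have "Th_inv k ar (direct_prod A1 B1) = Th_inv k ar (direct_prod A1' B1')"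
    using game_equiv_Th_inv_eq[OF game_equiv_direct_prod[OF A1 B1]] .
  also have "\<dots> = Th_inv k ar (direct_prod A2' B2')"
    by (rule chain) (intro game_equiv_Th_inv_eq game_equiv_direct_prod)
  also have "\<dots> = Th_inv k ar (direct_prod A2 B2)"
    using game_equiv_Th_inv_eq[OF game_equiv_direct_prod[OF A2 B2]] by simp
  finally show ?thesis
    using disj_union by blast
qed

end
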